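(* The set $\bigcup_{p=0}^\infty Y_p$ is dense in $\mathbb R$, where $Y_p=\{z\in\mathbb C:\psi^{\circ p}(z)=0\}$ (so $Y_0=\{0\}$, $Y_1=\{-1,1\}$, $Y_2=\{(\pm1\pm\sqrt5)/2\}$, ...). Each $Y_p$ consists of $2^p$ real numbers.
   Context: $\psi(z)=z-1/z$, viewed as a rational map of the Riemann sphere, and $\psi^{\circ p}$ is its $p$-fold composition ($\psi^{\circ0}(z)=z$). *)

theory Defs
  imports "HOL-Analysis.Analysis"
begin

text \<open>The Riemann sphere is modelled as complex option: Some z is a finite point,
  None is the point at infinity.\<close>

definition psi :: "complex option \<Rightarrow> complex option" where
  "psi w = (case w of None \<Rightarrow> None
                    | Some z \<Rightarrow> (if z = 0 then None else Some (z - 1 / z)))"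

definition Y :: "nat \<Rightarrow> complex set" where
  "Y p = {z. (psi ^^ p) (Some z) = Some 0}"

end

(* For real w, the equation z - 1/z = w has two distinct real roots, so by induction
   Y p consists of 2^p real numbers.

   For density, let Z be the set of all these zeros. It contains 1, is symmetric, and is
   closed under taking preimages under phi(x) = x - 1/x, which is an increasing bijection
   of (0, oo) onto the reals. Hence an interval [a, b] with 0 < a meets Z as soon as
   phi[a, b] does. If b < 1, the reflected interval -phi[a, b] lies in (0, oo) and is at
   least twice as long; if a > 1, then phi[a, b] lies in (0, oo), is no shorter, and its
   right end has square at most b^2 - 1. This descent must end at an interval containing 1. *)

theory Submission
  imports Defs
begin

lemma funpow_psi_None: "(psi ^^ n) None = None"
  by (induction n) (auto simp: psi_def)

lemma Y_0: "Y 0 = {0}"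
  by (simp add: Y_def)

lemma Y_Suc: "Y (Suc p) = {z. z \<noteq> 0 \<and> z - 1 / z \<in> Y p}"
proof -
  have "(psi ^^ Suc p) w = (psi ^^ p) (psi w)" for w
    by (simp add: funpow_Suc_right del: funpow.simps)
  then show ?thesis
    by (auto simp: Y_def psi_def funpow_psi_None)
qed

lemma uminus_in_Y_iff: "- z \<in> Y p \<longleftrightarrow> z \<in> Y p"
proof (induction p arbitrary: z)
  case 0
  then show ?case by (simp add: Y_0)
next
  case (Suc p)
  have "1 / z - z = - (z - 1 / z)" by simp
  then show ?case using Suc[of "z - 1 / z"] by (simp add: Y_Suc)
qed

lemma minus_inverse_diff:
  fixes a b :: "'a::field"
  assumes "a \<noteq> 0" "b \<noteq> 0"
  shows "(b - 1 / b) - (a - 1 / a) = (b - a) * (1 + 1 / (a * b))"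
  using assms by (simp add: field_simps)

lemma minus_inverse_strict_mono:
  fixes a b :: "'a::linordered_field"
  assumes "0 < a" "a < b"
  shows "a - 1 / a < b - 1 / b"
proof -
  have "0 < a * b"
    using assms by simp
  then have "0 < (b - a) * (1 + 1 / (a * b))"
    using assms by (simp add: add_pos_pos)
  then show ?thesis
    using minus_inverse_diff[of a b] assms by simp
qed

lemma minus_inverse_interval_above_one:
  fixes a b :: "'a::linordered_field"
  assumes "1 < a" "a < b"
  shows "0 < a - 1 / a"
    and "b - a \<le> (b - 1 / b) - (a - 1 / a)"
    and "(b - 1 / b)\<^sup>2 \<le> b\<^sup>2 - 1"
proof -
  have "1 / a < 1"
    using assms(1) by simp
  then show "0 < a - 1 / a"
    using assms(1) by linarith
  have "0 \<le> (b - a) * (1 / (a * b))"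
    using assms by simp
  then show "b - a \<le> (b - 1 / b) - (a - 1 / a)"
    using minus_inverse_diff[of a b] assms by (simp add: distrib_left)
  have "1 / b\<^sup>2 < 1"
    using assms by simp
  moreover have "(b - 1 / b)\<^sup>2 = b\<^sup>2 - 2 + 1 / b\<^sup>2"
    using assms by (simp add: power2_eq_square field_simps)
  ultimately show "(b - 1 / b)\<^sup>2 \<le> b\<^sup>2 - 1"
    by linarith
qed

lemma minus_inverse_interval_below_one:
  fixes a b :: "'a::linordered_field"
  assumes "0 < a" "a < b" "b < 1"
  shows "0 < 1 / b - b"
    and "2 * (b - a) \<le> (1 / a - a) - (1 / b - b)"
proof -
  have "1 < 1 / b"
    using assms by simp
  then show "0 < 1 / b - b"
    using assms(3) by linarith
  have "a * b < 1"
    using mult_strict_mono[of a 1 b 1] assms by simp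
  then have "1 \<le> 1 / (a * b)"
    using assms by simp
  then have "(b - a) * 2 \<le> (b - a) * (1 + 1 / (a * b))"
    using assms by (intro mult_left_mono) simp_all
  then show "2 * (b - a) \<le> (1 / a - a) - (1 / b - b)"
    using minus_inverse_diff[of a b] assms by (simp add: mult.commute)
qed

text \<open>The positive root of \<open>z\<^sup>2 - y z - 1\<close>; the other root is \<open>- psi_inv_pos (- y)\<close>.\<close>

definition psi_inv_pos :: "real \<Rightarrow> real" where
  "psi_inv_pos y = (y + sqrt (y^2 + 4)) / 2"

lemma psi_inv_pos_gt_0: "psi_inv_pos y > 0"
proof -
  have "\<bar>y\<bar> = sqrt (y^2)" by simp
  also have "\<dots> < sqrt (y^2 + 4)" by (rule real_sqrt_less_mono) simp
  finally show ?thesis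
    unfolding psi_inv_pos_def using abs_ge_minus_self[of y] by simp
qed

lemma psi_inv_pos_diff: "psi_inv_pos y - psi_inv_pos (- y) = y"
  by (simp add: psi_inv_pos_def field_simps)

lemma psi_inv_pos_mult_uminus: "psi_inv_pos y * psi_inv_pos (- y) = 1"
proof -
  have "sqrt (y^2 + 4)^2 = y^2 + 4" by simp
  then show ?thesis
    by (simp add: psi_inv_pos_def power2_eq_square field_simps)
qed

lemma psi_inv_pos_eq: "psi_inv_pos y - 1 / psi_inv_pos y = y"
proof -
  have "1 / psi_inv_pos y = psi_inv_pos (- y)"
    using psi_inv_pos_mult_uminus[of y] psi_inv_pos_gt_0[of y] by (simp add: field_simps)
  then show ?thesis using psi_inv_pos_diff by simp
qed

lemma psi_inv_pos_minus_inverse: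
  assumes "0 < x"
  shows "psi_inv_pos (x - 1 / x) = x"
proof (rule ccontr)
  define u where "u = psi_inv_pos (x - 1 / x)"
  have u: "0 < u" "u - 1 / u = x - 1 / x"
    unfolding u_def by (rule psi_inv_pos_gt_0, rule psi_inv_pos_eq)
  assume "psi_inv_pos (x - 1 / x) \<noteq> x"
  then have "u < x \<or> x < u"
    unfolding u_def by linarith
  then show False
    using minus_inverse_strict_mono[of u x] minus_inverse_strict_mono[of x u] u assms by auto
qed

lemma psi_inv_pos_mono:
  assumes "y \<le> y'"
  shows "psi_inv_pos y \<le> psi_inv_pos y'"
  using minus_inverse_strict_mono[of "psi_inv_pos y'" "psi_inv_pos y"]
    psi_inv_pos_eq[of y] psi_inv_pos_eq[of y'] psi_inv_pos_gt_0[of y'] assms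
  by fastforce

lemma psi_fiber_of_real:
  "{z. z \<noteq> 0 \<and> z - 1 / z = complex_of_real y} =
     {of_real (psi_inv_pos y), - of_real (psi_inv_pos (- y))}"
proof -
  define r s where "r = psi_inv_pos y" and "s = psi_inv_pos (- y)"
  have factor: "(z - of_real r) * (z + of_real s) = z^2 - of_real y * z - 1" for z :: complex
  proof -
    have "(z - of_real r) * (z + of_real s) = z^2 - of_real (r - s) * z - of_real (r * s)"
      by (simp add: algebra_simps power2_eq_square)
    then show ?thesis
      using psi_inv_pos_diff psi_inv_pos_mult_uminus by (simp add: r_def s_def)
  qed
  have "z \<noteq> 0 \<and> z - 1 / z = of_real y \<longleftrightarrow> z = of_real r \<or> z = - of_real s"
    for z :: complex
  proof -
    have "z \<noteq> 0 \<and> z - 1 / z = of_real y \<longleftrightarrow> z^2 - of_real y * z - 1 = 0"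
      by (cases "z = 0") (auto simp: field_simps power2_eq_square)
    also have "\<dots> \<longleftrightarrow> (z - of_real r) * (z + of_real s) = 0"
      by (simp only: factor)
    finally show ?thesis
      by (simp add: add_eq_0_iff2)
  qed
  then show ?thesis
    unfolding r_def s_def by (intro set_eqI) simp
qed

lemma Y_subset_Reals_card: "Y p \<subseteq> \<real> \<and> card (Y p) = 2 ^ p"
proof (induction p)
  case 0
  then show ?case by (simp add: Y_0)
next
  case (Suc p)
  define fiber where "fiber w = {z. z \<noteq> 0 \<and> z - 1 / z = w}" for w :: complex
  have Y_Suc_UN: "Y (Suc p) = (\<Union>w\<in>Y p. fiber w)"
    unfolding Y_Suc fiber_def by auto
  have fiber: "fiber w \<subseteq> \<real> \<and> card (fiber w) = 2" if "w \<in> Y p" for w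
  proof -
    have "w \<in> \<real>" using that Suc.IH by blast
    then obtain y where w: "w = of_real y" by (rule Reals_cases)
    have "psi_inv_pos y \<noteq> - psi_inv_pos (- y)"
      using psi_inv_pos_gt_0[of y] psi_inv_pos_gt_0[of "- y"] by linarith
    then have "complex_of_real (psi_inv_pos y) \<noteq> - of_real (psi_inv_pos (- y))"
      using of_real_eq_iff[of "psi_inv_pos y" "- psi_inv_pos (- y)", where 'a=complex] by simp
    then show ?thesis
      unfolding fiber_def w psi_fiber_of_real by simp
  qed
  have "card (Y (Suc p)) = (\<Sum>w\<in>Y p. card (fiber w))"
    unfolding Y_Suc_UN
  proof (rule card_UN_disjoint)
    show "finite (Y p)" using Suc.IH by (simp add: card_ge_0_finite)
    show "\<forall>w\<in>Y p. finite (fiber w)" using fiber by (simp add: card_ge_0_finite)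
    show "\<forall>v\<in>Y p. \<forall>w\<in>Y p. v \<noteq> w \<longrightarrow> fiber v \<inter> fiber w = {}"
      unfolding fiber_def by auto
  qed
  also have "\<dots> = 2 ^ Suc p"
    using fiber Suc.IH by simp
  finally show ?case
    using fiber unfolding Y_Suc_UN by blast
qed

definition Y_reals :: "real set" where
  "Y_reals = {x. \<exists>p. complex_of_real x \<in> Y p}"

lemma UNION_Y_eq_image_Y_reals: "(\<Union>p. Y p) = of_real ` Y_reals"
proof -
  have "z \<in> of_real ` Y_reals" if z: "z \<in> Y p" for z p
  proof -
    have "z \<in> \<real>"
      using z Y_subset_Reals_card by blast
    then obtain x where "z = of_real x"
      by (rule Reals_cases)
    then show ?thesis
      using z by (auto simp: Y_reals_def)
  qed
  then show ?thesis
    by (auto simp: Y_reals_def)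
qed

lemma zero_mem_Y_reals: "0 \<in> Y_reals"
  using Y_0 by (auto simp: Y_reals_def)

lemma one_mem_Y_reals: "1 \<in> Y_reals"
proof -
  have "1 \<in> Y 1"
    by (simp add: Y_Suc Y_0)
  then show ?thesis
    unfolding Y_reals_def by (metis (mono_tags) mem_Collect_eq of_real_1)
qed

lemma uminus_mem_Y_reals_iff: "- x \<in> Y_reals \<longleftrightarrow> x \<in> Y_reals"
  by (simp add: Y_reals_def uminus_in_Y_iff)

lemma psi_inv_pos_mem_Y_reals:
  assumes "y \<in> Y_reals"
  shows "psi_inv_pos y \<in> Y_reals"
proof -
  obtain p where "complex_of_real y \<in> Y p"
    using assms by (auto simp: Y_reals_def)
  moreover have "complex_of_real (psi_inv_pos y) - 1 / of_real (psi_inv_pos y) = of_real y"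
    using psi_inv_pos_eq[of y] by (metis of_real_1 of_real_diff of_real_divide)
  ultimately have "complex_of_real (psi_inv_pos y) \<in> Y (Suc p)"
    using psi_inv_pos_gt_0[of y] by (simp add: Y_Suc)
  then show ?thesis
    by (auto simp: Y_reals_def)
qed

lemma Y_reals_meets_interval_if_meets_image:
  assumes "0 < a" "a \<le> b" "{a - 1 / a..b - 1 / b} \<inter> Y_reals \<noteq> {}"
  shows "{a..b} \<inter> Y_reals \<noteq> {}"
proof -
  obtain y where y: "y \<in> Y_reals" "a - 1 / a \<le> y" "y \<le> b - 1 / b"
    using assms(3) by auto
  have "a \<le> psi_inv_pos y"
    using psi_inv_pos_mono[OF y(2)] psi_inv_pos_minus_inverse[OF assms(1)] by simp
  moreover have "psi_inv_pos y \<le> b"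
    using psi_inv_pos_mono[OF y(3)] psi_inv_pos_minus_inverse[of b] assms(1,2) by simp
  ultimately show ?thesis
    using psi_inv_pos_mem_Y_reals[OF y(1)] by auto
qed

lemma Y_reals_meets_interval_uminus:
  assumes "{a..b} \<inter> Y_reals \<noteq> {}"
  shows "{- b..- a} \<inter> Y_reals \<noteq> {}"
proof -
  obtain x where "x \<in> Y_reals" "a \<le> x" "x \<le> b"
    using assms by auto
  then have "- x \<in> {- b..- a} \<inter> Y_reals"
    by (simp add: uminus_mem_Y_reals_iff)
  then show ?thesis
    by blast
qed

lemma Y_reals_meets_interval_of_width:
  fixes a b :: real and n m :: nat
  assumes "0 < a" "a < b" "1 / 2 ^ n \<le> b - a" "b\<^sup>2 \<le> real m"
  shows "{a..b} \<inter> Y_reals \<noteq> {}"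
  using assms
proof (induction n arbitrary: m a b rule: less_induct)
  case (less n)
  note width_IH = less.IH
  from less.prems show ?case
  proof (induction m arbitrary: a b rule: less_induct)
    case (less m)
    consider "a \<le> 1" "1 \<le> b" | "b < 1" | "1 < a"
      by linarith
    then show ?case
    proof cases
      case 1
      then show ?thesis
        using one_mem_Y_reals by auto
    next
      case 2
      note image = minus_inverse_interval_below_one[OF less.prems(1,2) 2]
      have "b - a < 1"
        using less.prems(1) 2 by linarith
      then obtain k where n: "n = Suc k"
        using less.prems(3) by (cases n) auto
      have width: "1 / 2 ^ k \<le> (1 / a - a) - (1 / b - b)"
        using image(2) less.prems(3) n by simp
      moreover have "0 < (1 / 2 ^ k :: real)"
        by simp
      ultimately have "1 / b - b < 1 / a - a"
        by linarith
      moreover have "(1 / a - a)\<^sup>2 \<le> real (nat \<lceil>(1 / a - a)\<^sup>2\<rceil>)"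
        by linarith
      moreover have "k < n"
        using n by simp
      ultimately have "{1 / b - b..1 / a - a} \<inter> Y_reals \<noteq> {}"
        using width_IH image(1) width by blast
      then have "{a - 1 / a..b - 1 / b} \<inter> Y_reals \<noteq> {}"
        using Y_reals_meets_interval_uminus by fastforce
      then show ?thesis
        using Y_reals_meets_interval_if_meets_image less.prems(1,2) by simp
    next
      case 3
      note image = minus_inverse_interval_above_one[OF 3 less.prems(2)]
      have "1 < b\<^sup>2"
        using 3 less.prems(2) by (simp add: one_less_power)
      then obtain k where m: "m = Suc k"
        using less.prems(4) by (cases m) auto
      have "a - 1 / a < b - 1 / b"
        using minus_inverse_strict_mono less.prems(1,2) by blast
      moreover have "1 / 2 ^ n \<le> (b - 1 / b) - (a - 1 / a)"
        using image(2) less.prems(3) by linarith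
      moreover have "(b - 1 / b)\<^sup>2 \<le> real k"
        using image(3) less.prems(4) m by simp
      moreover have "k < m"
        using m by simp
      ultimately have "{a - 1 / a..b - 1 / b} \<inter> Y_reals \<noteq> {}"
        using less.IH image(1) by blast
      then show ?thesis
        using Y_reals_meets_interval_if_meets_image less.prems(1,2) by simp
    qed
  qed
qed

lemma Y_reals_meets_interval:
  fixes a b :: real
  assumes "0 < a" "a < b"
  shows "{a..b} \<inter> Y_reals \<noteq> {}"
proof -
  obtain n where "(1 / 2) ^ n < b - a"
    using real_arch_pow_inv[of "b - a" "1 / 2"] assms by auto
  then have "1 / 2 ^ n \<le> b - a"
    by (simp add: power_one_over)
  moreover have "b\<^sup>2 \<le> real (nat \<lceil>b\<^sup>2\<rceil>)"
    by linarith
  ultimately show ?thesis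
    using Y_reals_meets_interval_of_width assms by blast
qed

lemma Y_reals_dense:
  fixes a b :: real
  assumes "a < b"
  shows "\<exists>x\<in>Y_reals. a < x \<and> x < b"
proof -
  define c d where "c = (2 * a + b) / 3" and "d = (a + 2 * b) / 3"
  have cd: "a < c" "c < d" "d < b"
    using assms by (simp_all add: c_def d_def)
  consider "0 \<le> a" | "b \<le> 0" | "a < 0" "0 < b"
    by linarith
  then show ?thesis
  proof cases
    case 1
    then have "{c..d} \<inter> Y_reals \<noteq> {}"
      using cd by (intro Y_reals_meets_interval) simp_all
    then show ?thesis
      using cd by force
  next
    case 2
    then have "{- d..- c} \<inter> Y_reals \<noteq> {}"
      using cd by (intro Y_reals_meets_interval) simp_all
    then have "{c..d} \<inter> Y_reals \<noteq> {}"
      using Y_reals_meets_interval_uminus[of "- d" "- c"] by simp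
    then show ?thesis
      using cd by force
  next
    case 3
    then show ?thesis
      using zero_mem_Y_reals by blast
  qed
qed

lemma closure_Y_reals: "closure Y_reals = UNIV"
proof -
  have "x \<in> closure Y_reals" for x
    unfolding closure_approachable
  proof (intro allI impI)
    fix e :: real
    assume "0 < e"
    then obtain y where "y \<in> Y_reals" "x - e < y" "y < x + e"
      using Y_reals_dense[of "x - e" "x + e"] by auto
    then show "\<exists>y\<in>Y_reals. dist y x < e"
      by (intro bexI[of _ y]) (auto simp: dist_real_def abs_less_iff)
  qed
  then show ?thesis
    by blast
qed

theorem proposition3p2:
  shows "closure (\<Union>p. Y p) = \<real> \<and>
         (\<forall>p. Y p \<subseteq> \<real> \<and> finite (Y p) \<and> card (Y p) = 2 ^ p)"
proof (intro conjI allI)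
  have "closure (\<Union>p. Y p) = closure (of_real ` Y_reals :: complex set)"
    by (simp add: UNION_Y_eq_image_Y_reals)
  also have "\<dots> = of_real ` closure Y_reals"
    by (simp add: closure_injective_linear_image inj_of_real)
  finally show "closure (\<Union>p. Y p) = \<real>"
    by (simp add: closure_Y_reals Reals_def)
  show "Y p \<subseteq> \<real>" "card (Y p) = 2 ^ p" for p
    using Y_subset_Reals_card by blast+
  then show "finite (Y p)" for p
    by (simp add: card_ge_0_finite)
qed

end
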